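(* Let $(\mathfrak{g},\langle\cdot,\cdot\rangle_{\mathfrak{g}})$ be an abelian quadratic Lie algebra (i.e. an abelian Lie algebra with a nondegenerate symmetric bilinear form) and let $A\in\mathfrak{so}(\mathfrak{g},\langle\cdot,\cdot\rangle_{\mathfrak{g}})$ be non-nilpotent. Let $\delta_A(\mathfrak{g})=\mathbb{R}e\oplus\mathfrak{g}\oplus\mathbb{R}\bar e$ be the double extension of $\mathfrak{g}$ by $A$, and let $(\mathfrak{a},\langle\cdot,\cdot\rangle_{\mathfrak{a}})$ be an abelian quadratic Lie algebra. Consider the product quadratic Lie algebra $\delta_A(\mathfrak{g})\oplus\mathfrak{a}$ (direct sum of Lie algebras, orthogonal direct sum of the forms). Then every derivation $D$ of $\delta_A(\mathfrak{g})\oplus\mathfrak{a}$ that is skew-symmetric with respect to the quadratic form satisfies $D(e)=0$. In particular, $\delta_A(\mathfrak{g})\oplus\mathfrak{a}$ admits no $k$-symplectic structure for any $k\ge1$.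
   Context: The double extension of a quadratic Lie algebra $(\mathfrak{g},[\cdot,\cdot]_{\mathfrak{g}},\langle\cdot,\cdot\rangle_{\mathfrak{g}})$ by a skew-symmetric endomorphism $A$ is the vector space $\delta_A(\mathfrak{g})=\mathbb{R}e\oplus\mathfrak{g}\oplus\mathbb{R}\bar e$ with nonvanishing brackets $[\bar e,u]=Au$ and $[u,v]=\langle Au,v\rangle_{\mathfrak{g}}\,e+[u,v]_{\mathfrak{g}}$ for $u,v\in\mathfrak{g}$ ($e$ central), and quadratic form $\langle xe+u+\bar x\bar e,\,xe+u+\bar x\bar e\rangle=2x\bar x+\langle u,u\rangle_{\mathfrak{g}}$. A quadratic Lie algebra is a real Lie algebra with a nondegenerate invariant symmetric bilinear form ($\langle[u,v],w\rangle+\langle[u,w],v\rangle=0$). A $k$-symplectic structure on a real Lie algebra $\mathfrak{k}$ of dimension $n(k+1)$ ($n,k\ge1$) is a pair consisting of a Lie subalgebra $\mathfrak{h}\subset\mathfrak{k}$ of dimension $nk$ and a family $(\theta_1,\dots,\theta_k)$ of skew-symmetric bilinear forms on $\mathfrak{k}$ such that: (i) $\bigcap_{i=1}^k\ker\theta_i=\{0\}$, where $\ker\theta_i=\{u:\theta_i(u,v)=0\ \forall v\}$; (ii) each $\theta_i$ is a 2-cocycle: $\theta_i([u,v],w)+\theta_i([v,w],u)+\theta_i([w,u],v)=0$ for all $u,v,w$; (iii) $\theta_i(u,v)=0$ for all $u,v\in\mathfrak{h}$ and all $i$. *)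

theory Defs
  imports "HOL-Analysis.Analysis"
begin

definition bilinear_on :: "'v::real_vector set \<Rightarrow> ('v \<Rightarrow> 'v \<Rightarrow> real) \<Rightarrow> bool" where
  "bilinear_on S B \<longleftrightarrow>
     (\<forall>x\<in>S. \<forall>y\<in>S. \<forall>z\<in>S. \<forall>c::real.
        B (x + y) z = B x z + B y z \<and> B (c *\<^sub>R x) z = c * B x z \<and>
        B z (x + y) = B z x + B z y \<and> B z (c *\<^sub>R x) = c * B z x)"

definition linear_on_carrier :: "'v::real_vector set \<Rightarrow> ('v \<Rightarrow> 'v) \<Rightarrow> bool" where
  "linear_on_carrier S D \<longleftrightarrow>
     (\<forall>x\<in>S. D x \<in> S) \<and>
     (\<forall>x\<in>S. \<forall>y\<in>S. \<forall>c::real. D (x + y) = D x + D y \<and> D (c *\<^sub>R x) = c *\<^sub>R D x)"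

definition quadratic_form_on :: "'v::real_vector set \<Rightarrow> ('v \<Rightarrow> 'v \<Rightarrow> real) \<Rightarrow> bool" where
  "quadratic_form_on S B \<longleftrightarrow> bilinear_on S B \<and>
     (\<forall>x\<in>S. \<forall>y\<in>S. B x y = B y x) \<and>
     (\<forall>x\<in>S. (\<forall>y\<in>S. B x y = 0) \<longrightarrow> x = 0)"

definition lie_derivation_on :: "'v::real_vector set \<Rightarrow> ('v \<Rightarrow> 'v \<Rightarrow> 'v) \<Rightarrow> ('v \<Rightarrow> 'v) \<Rightarrow> bool" where
  "lie_derivation_on K br D \<longleftrightarrow> linear_on_carrier K D \<and>
     (\<forall>x\<in>K. \<forall>y\<in>K. D (br x y) = br (D x) y + br x (D y))"

definition skew_on :: "'v::real_vector set \<Rightarrow> ('v \<Rightarrow> 'v \<Rightarrow> real) \<Rightarrow> ('v \<Rightarrow> 'v) \<Rightarrow> bool" where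
  "skew_on K B D \<longleftrightarrow> (\<forall>x\<in>K. \<forall>y\<in>K. B (D x) y + B x (D y) = 0)"

definition k_symplectic_on ::
  "'v::euclidean_space set \<Rightarrow> ('v \<Rightarrow> 'v \<Rightarrow> 'v) \<Rightarrow> nat \<Rightarrow> 'v set \<Rightarrow> (nat \<Rightarrow> 'v \<Rightarrow> 'v \<Rightarrow> real) \<Rightarrow> bool" where
  "k_symplectic_on K br k h \<theta> \<longleftrightarrow>
     1 \<le> k \<and>
     subspace h \<and> h \<subseteq> K \<and> (\<forall>u\<in>h. \<forall>v\<in>h. br u v \<in> h) \<and>
     (\<exists>n\<ge>1. dim K = n * (k + 1) \<and> dim h = n * k) \<and>
     (\<forall>i\<in>{1..k}.
        bilinear_on K (\<theta> i) \<and>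
        (\<forall>u\<in>K. \<forall>v\<in>K. \<theta> i u v = - \<theta> i v u) \<and>
        (\<forall>u\<in>K. \<forall>v\<in>K. \<forall>w\<in>K.
            \<theta> i (br u v) w + \<theta> i (br v w) u + \<theta> i (br w u) v = 0) \<and>
        (\<forall>u\<in>h. \<forall>v\<in>h. \<theta> i u v = 0)) \<and>
     (\<forall>u\<in>K. (\<forall>i\<in>{1..k}. \<forall>v\<in>K. \<theta> i u v = 0) \<longrightarrow> u = 0)"

text \<open>Elements x e + u + xb ebar of delta_A(g) are triples (x, u, xb).\<close>
fun dext_bracket :: "('g::real_vector \<Rightarrow> 'g \<Rightarrow> 'g) \<Rightarrow> ('g \<Rightarrow> 'g \<Rightarrow> real) \<Rightarrow> ('g \<Rightarrow> 'g)
     \<Rightarrow> real \<times> 'g \<times> real \<Rightarrow> real \<times> 'g \<times> real \<Rightarrow> real \<times> 'g \<times> real" where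
  "dext_bracket brg Bg A (x, u, xb) (y, v, yb) =
     (Bg (A u) v, xb *\<^sub>R A v - yb *\<^sub>R A u + brg u v, 0)"

fun dext_form :: "('g::real_vector \<Rightarrow> 'g \<Rightarrow> real) \<Rightarrow> real \<times> 'g \<times> real \<Rightarrow> real \<times> 'g \<times> real \<Rightarrow> real" where
  "dext_form Bg (x, u, xb) (y, v, yb) = x * yb + xb * y + Bg u v"

definition dext_e :: "real \<times> 'g::real_vector \<times> real" where
  "dext_e = (1, 0, 0)"

fun prod_bracket :: "('p \<Rightarrow> 'p \<Rightarrow> 'p) \<Rightarrow> ('q \<Rightarrow> 'q \<Rightarrow> 'q) \<Rightarrow> 'p \<times> 'q \<Rightarrow> 'p \<times> 'q \<Rightarrow> 'p \<times> 'q" where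
  "prod_bracket b1 b2 (p, w) (q, w') = (b1 p q, b2 w w')"

fun prod_form :: "('p \<Rightarrow> 'p \<Rightarrow> real) \<Rightarrow> ('q \<Rightarrow> 'q \<Rightarrow> real) \<Rightarrow> 'p \<times> 'q \<Rightarrow> 'p \<times> 'q \<Rightarrow> real" where
  "prod_form B1 B2 (p, w) (q, w') = B1 p q + B2 w w'"

end

theory Submission
  imports Defs
begin

text \<open>Every skew-symmetric 2-cocycle \<theta> of \<delta>_A(g) \<oplus> a vanishes on e. The cocycle identity on
  triples from g \<times> g \<times> a and from ebar \<times> g \<times> e shows that \<theta>(e, \<cdot>) kills a and A(g); on g \<times> g \<times> g it
  shows that \<theta>(e, \<cdot>) also kills g unless A^3 = 0. On ebar \<times> g \<times> g it shows that the endomorphism P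
  representing \<theta> on g satisfies [P, A] = -\<theta>(e, ebar) A, and then the powers A^k satisfy
  [P, A^k] = -k \<theta>(e, ebar) A^k, which is impossible for large k unless \<theta>(e, ebar) = 0 or A is
  nilpotent. For a skew derivation D, (x, y) \<mapsto> \<langle>D x, y\<rangle> is such a cocycle, so D e is orthogonal
  to everything; and e lies in the common kernel of the forms of any k-symplectic structure.\<close>

lemma bounded_linear_funpow:
  fixes f :: "'a::real_normed_vector \<Rightarrow> 'a"
  assumes "bounded_linear f"
  shows "bounded_linear (f ^^ n)"
proof (induction n)
  case 0
  show ?case by (simp add: id_def)
next
  case (Suc n)
  show ?case using bounded_linear_compose[OF assms Suc.IH] by (simp add: o_def)
qed

lemma commutator_funpow:
  fixes P A :: "'a::real_vector \<Rightarrow> 'a"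
  assumes A: "linear A" and comm: "\<And>u. P (A u) - A (P u) = c *\<^sub>R A u"
  shows "P ((A ^^ k) u) - (A ^^ k) (P u) = (real k * c) *\<^sub>R (A ^^ k) u"
proof (induction k arbitrary: u)
  case 0
  then show ?case by simp
next
  case (Suc k)
  have "P ((A ^^ Suc k) u) = A (P ((A ^^ k) u)) + c *\<^sub>R (A ^^ Suc k) u"
    using comm[of "(A ^^ k) u"] by (simp add: algebra_simps)
  also have "P ((A ^^ k) u) = (A ^^ k) (P u) + (real k * c) *\<^sub>R (A ^^ k) u"
    using Suc.IH[of u] by (simp add: algebra_simps)
  finally show ?case
    by (simp add: linear_add[OF A] linear_scale[OF A] algebra_simps)
qed

text \<open>[P, A^k] = k c A^k has operator norm k |c| \<parallel>A^k\<parallel>, but also at most 2 \<parallel>P\<parallel> \<parallel>A^k\<parallel>;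
  so A^k = 0 as soon as k |c| > 2 \<parallel>P\<parallel>.\<close>
lemma commutator_eq_scaleR_imp_nilpotent:
  fixes P A :: "'a::real_normed_vector \<Rightarrow> 'a"
  assumes P: "bounded_linear P" and A: "bounded_linear A" and "c \<noteq> 0"
    and comm: "\<And>u. P (A u) - A (P u) = c *\<^sub>R A u"
  shows "\<exists>m. A ^^ m = (\<lambda>_. 0)"
proof -
  obtain k :: nat where k: "2 * onorm P < real k * \<bar>c\<bar>"
    using reals_Archimedean3[of "\<bar>c\<bar>"] \<open>c \<noteq> 0\<close> by auto
  have Ak: "bounded_linear (A ^^ k)"
    using A by (rule bounded_linear_funpow)
  have comm_k: "(\<lambda>u. (real k * c) *\<^sub>R (A ^^ k) u) = (\<lambda>u. P ((A ^^ k) u) + - (A ^^ k) (P u))"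
    using commutator_funpow[of A P c k] bounded_linear.linear[OF A] comm by (simp add: fun_eq_iff)
  have "\<bar>real k * c\<bar> * onorm (A ^^ k) = onorm (\<lambda>u. (real k * c) *\<^sub>R (A ^^ k) u)"
    using onorm_scaleR[OF Ak] by simp
  also have "\<dots> = onorm (\<lambda>u. P ((A ^^ k) u) + - (A ^^ k) (P u))"
    by (simp only: comm_k)
  also have "\<dots> \<le> onorm (\<lambda>u. P ((A ^^ k) u)) + onorm (\<lambda>u. - (A ^^ k) (P u))"
    using bounded_linear_compose[OF P Ak] bounded_linear_minus[OF bounded_linear_compose[OF Ak P]]
    by (rule onorm_triangle)
  also have "\<dots> \<le> onorm P * onorm (A ^^ k) + onorm (A ^^ k) * onorm P"
    using add_mono[OF onorm_compose[OF P Ak] onorm_compose[OF Ak P]] by (simp add: onorm_neg o_def)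
  also have "\<dots> = 2 * onorm P * onorm (A ^^ k)"
    by simp
  finally have le: "\<bar>real k * c\<bar> * onorm (A ^^ k) \<le> 2 * onorm P * onorm (A ^^ k)" .
  have "onorm (A ^^ k) = 0"
  proof (rule ccontr)
    assume "onorm (A ^^ k) \<noteq> 0"
    then have "0 < onorm (A ^^ k)"
      using onorm_pos_le[OF Ak] by linarith
    then have "\<bar>real k * c\<bar> \<le> 2 * onorm P"
      by (rule mult_right_le_imp_le[OF le])
    with k show False
      by (simp add: abs_mult)
  qed
  then have "A ^^ k = (\<lambda>_. 0)"
    using onorm_eq_0[OF Ak] by (simp add: fun_eq_iff)
  then show ?thesis ..
qed

lemma bilinear_on_UNIV_linear:
  assumes "bilinear_on UNIV B"
  shows "linear (\<lambda>x. B x z)" "linear (B z)"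
  using assms unfolding bilinear_on_def linear_iff by auto

lemma bilinear_on_UNIV_simps:
  assumes "bilinear_on UNIV B"
  shows "B (x + y) z = B x z + B y z" "B z (x + y) = B z x + B z y"
    "B (x - y) z = B x z - B y z" "B z (x - y) = B z x - B z y"
    "B (- x) z = - B x z" "B z (- x) = - B z x"
    "B (c *\<^sub>R x) z = c * B x z" "B z (c *\<^sub>R x) = c * B z x"
    "B 0 z = 0" "B z 0 = 0"
  using linear_add[OF bilinear_on_UNIV_linear(1)[OF assms]] linear_add[OF bilinear_on_UNIV_linear(2)[OF assms]]
    linear_diff[OF bilinear_on_UNIV_linear(1)[OF assms]] linear_diff[OF bilinear_on_UNIV_linear(2)[OF assms]]
    linear_neg[OF bilinear_on_UNIV_linear(1)[OF assms]] linear_neg[OF bilinear_on_UNIV_linear(2)[OF assms]]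
    linear_scale[OF bilinear_on_UNIV_linear(1)[OF assms]] linear_scale[OF bilinear_on_UNIV_linear(2)[OF assms]]
    linear_0[OF bilinear_on_UNIV_linear(1)[OF assms]] linear_0[OF bilinear_on_UNIV_linear(2)[OF assms]]
  by simp_all

lemma nondegenerate_form_eqI:
  assumes "bilinear_on UNIV B" and nondeg: "\<And>x. (\<forall>y. B x y = 0) \<Longrightarrow> x = 0"
    and "\<And>y. B x y = B x' y"
  shows "x = x'"
  using nondeg[of "x - x'"] assms(3) by (simp add: bilinear_on_UNIV_simps[OF assms(1)])

lemma nondegenerate_form_represents_functional:
  fixes B :: "'a::euclidean_space \<Rightarrow> 'a \<Rightarrow> real"
  assumes B: "bilinear_on UNIV B" and nondeg: "\<And>x. (\<forall>y. B x y = 0) \<Longrightarrow> x = 0"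
    and f: "linear f"
  shows "\<exists>z. \<forall>v. f v = B z v"
proof -
  define M where "M z = (\<Sum>b\<in>Basis. B z b *\<^sub>R b)" for z
  have M_Basis: "M z \<bullet> b = B z b" if "b \<in> Basis" for z b
    unfolding M_def using that by simp
  have expand: "g v = (\<Sum>b\<in>Basis. (v \<bullet> b) * g b)" if "linear g" for g :: "'a \<Rightarrow> real" and v
  proof -
    have "g v = g (\<Sum>b\<in>Basis. (v \<bullet> b) *\<^sub>R b)"
      by (simp add: euclidean_representation)
    also have "\<dots> = (\<Sum>b\<in>Basis. (v \<bullet> b) * g b)"
      by (simp add: linear_sum[OF that] linear_scale[OF that] o_def)
    finally show ?thesis .
  qed
  have B_z: "linear (B z)" for z
    using B by (rule bilinear_on_UNIV_linear(2))
  have "linear M"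
    unfolding linear_iff M_def
    by (simp add: bilinear_on_UNIV_simps[OF B] scaleR_add_left sum.distrib scaleR_sum_right)
  moreover have "inj M"
  proof (rule injI)
    fix x y assume "M x = M y"
    then have "B x b = B y b" if "b \<in> Basis" for b
      using M_Basis[OF that, of x] M_Basis[OF that, of y] by simp
    then have "B x v = B y v" for v
      using expand[OF B_z, of x v] expand[OF B_z, of y v] by simp
    then show "x = y"
      using nondegenerate_form_eqI[OF B nondeg] by blast
  qed
  ultimately have "surj M"
    by (rule linear_injective_imp_surjective) simp
  then obtain z where z: "M z = (\<Sum>b\<in>Basis. f b *\<^sub>R b)"
    by (metis surjD)
  then have "B z b = f b" if "b \<in> Basis" for b
    using M_Basis[OF that, of z] that by simp
  then have "f v = B z v" for v
    using expand[OF B_z, of z v] expand[OF f, of v] by simp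
  then show ?thesis by blast
qed

lemma nondegenerate_form_represents_bilinear_form:
  fixes B :: "'a::euclidean_space \<Rightarrow> 'a \<Rightarrow> real"
  assumes B: "bilinear_on UNIV B" and nondeg: "\<And>x. (\<forall>y. B x y = 0) \<Longrightarrow> x = 0"
    and \<omega>: "bilinear_on UNIV \<omega>"
  shows "\<exists>P. linear P \<and> (\<forall>u v. \<omega> u v = B (P u) v)"
proof -
  have "\<forall>u. \<exists>z. \<forall>v. \<omega> u v = B z v"
    using nondegenerate_form_represents_functional[OF B nondeg bilinear_on_UNIV_linear(2)[OF \<omega>]] by blast
  then obtain P where P: "\<And>u v. \<omega> u v = B (P u) v"
    by metis
  have "linear P"
    unfolding linear_iff
    by (intro conjI allI nondegenerate_form_eqI[OF B nondeg])
      (simp_all add: bilinear_on_UNIV_simps[OF B] bilinear_on_UNIV_simps[OF \<omega>] flip: P)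
  with P show ?thesis by blast
qed

definition skew_cocycle_on :: "'v::real_vector set \<Rightarrow> ('v \<Rightarrow> 'v \<Rightarrow> 'v) \<Rightarrow> ('v \<Rightarrow> 'v \<Rightarrow> real) \<Rightarrow> bool" where
  "skew_cocycle_on K br \<theta> \<longleftrightarrow> bilinear_on K \<theta> \<and> (\<forall>u\<in>K. \<forall>v\<in>K. \<theta> u v = - \<theta> v u) \<and>
     (\<forall>u\<in>K. \<forall>v\<in>K. \<forall>w\<in>K. \<theta> (br u v) w + \<theta> (br v w) u + \<theta> (br w u) v = 0)"

lemma skew_derivation_skew_cocycle:
  fixes K :: "'v::real_vector set"
  assumes Q: "bilinear_on K Q" and Q_sym: "\<And>x y. x \<in> K \<Longrightarrow> y \<in> K \<Longrightarrow> Q x y = Q y x"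
    and Q_inv: "\<forall>x\<in>K. \<forall>y\<in>K. \<forall>z\<in>K. Q (br x y) z = - Q y (br x z)"
    and br_anti: "\<And>x y. x \<in> K \<Longrightarrow> y \<in> K \<Longrightarrow> br x y = - br y x"
    and br_closed: "\<And>x y. x \<in> K \<Longrightarrow> y \<in> K \<Longrightarrow> br x y \<in> K"
    and D: "lie_derivation_on K br D" and D_skew: "skew_on K Q D"
  shows "skew_cocycle_on K br (\<lambda>x y. Q (D x) y)"
proof -
  have D_closed: "D x \<in> K" if "x \<in> K" for x
    using D that unfolding lie_derivation_on_def linear_on_carrier_def by blast
  have D_Leibniz: "D (br x y) = br (D x) y + br x (D y)" if "x \<in> K" "y \<in> K" for x y
    using D that unfolding lie_derivation_on_def by blast
  have Q_add: "Q (x + y) z = Q x z + Q y z" and Q_scale: "Q (c *\<^sub>R x) z = c * Q x z"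
    and Q_scale': "Q z (c *\<^sub>R x) = c * Q z x"
    if "x \<in> K" "y \<in> K" "z \<in> K" for x y z c
    using Q that unfolding bilinear_on_def by auto
  have Q_minus: "Q z (- x) = - Q z x" if "x \<in> K" "z \<in> K" for x z
    using Q_scale'[OF that(1) that(1) that(2), of "-1"] by simp
  have DQ_skew: "Q (D x) y = - Q (D y) x" if "x \<in> K" "y \<in> K" for x y
  proof -
    have "Q (D x) y + Q x (D y) = 0"
      using D_skew that unfolding skew_on_def by blast
    then show ?thesis
      by (simp add: Q_sym[OF that(1) D_closed[OF that(2)]] eq_neg_iff_add_eq_0)
  qed
  have Q_assoc: "Q (br x y) z = Q x (br y z)" if "x \<in> K" "y \<in> K" "z \<in> K" for x y z
    using Q_inv[rule_format, of y x z] br_anti[of x y] Q_minus[of "br y z" x] Q_scale[of "br y x" "br y x" z "-1"]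
      Q_sym[of "br y x" z] Q_sym[of x "br y z"] that br_closed by simp
  have Q_cyclic: "Q x (br y z) = Q y (br z x)" if "x \<in> K" "y \<in> K" "z \<in> K" for x y z
    using Q_sym[of x "br y z"] Q_assoc[of y z x] br_closed that by simp
  have expand: "Q (D (br x y)) z = Q (D x) (br y z) + Q (D y) (br z x)"
    if "x \<in> K" "y \<in> K" "z \<in> K" for x y z
  proof -
    have "Q (D (br x y)) z = Q (br (D x) y) z + Q (br x (D y)) z"
      using D_Leibniz Q_add br_closed D_closed that by simp
    also have "\<dots> = Q (D x) (br y z) + Q x (br (D y) z)"
      using Q_assoc D_closed that by simp
    also have "Q x (br (D y) z) = Q (D y) (br z x)"
      using Q_cyclic D_closed that by simp
    finally show ?thesis .
  qed
  show ?thesis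
    unfolding skew_cocycle_on_def
  proof (intro conjI ballI)
    show "bilinear_on K (\<lambda>x y. Q (D x) y)"
      using D Q D_closed unfolding bilinear_on_def lie_derivation_on_def linear_on_carrier_def by simp
  next
    fix x y assume "x \<in> K" "y \<in> K"
    then show "Q (D x) y = - Q (D y) x" by (rule DQ_skew)
  next
    fix x y z assume xyz: "x \<in> K" "y \<in> K" "z \<in> K"
    show "Q (D (br x y)) z + Q (D (br y z)) x + Q (D (br z x)) y = 0"
      using expand[OF xyz] DQ_skew[of x "br y z"] DQ_skew[of y "br z x"] xyz br_closed by simp
  qed
qed

lemma skew_derivation_eq_0_if_cocycles_vanish_at:
  assumes Q: "quadratic_form_on K Q" and "u \<in> K" and D: "lie_derivation_on K br D"
    and D_cocycle: "skew_cocycle_on K br (\<lambda>x y. Q (D x) y)"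
    and vanish: "\<forall>\<theta>. skew_cocycle_on K br \<theta> \<longrightarrow> (\<forall>v\<in>K. \<theta> u v = 0)"
  shows "D u = 0"
proof -
  have "D u \<in> K"
    using D \<open>u \<in> K\<close> unfolding lie_derivation_on_def linear_on_carrier_def by blast
  moreover have "\<forall>v\<in>K. Q (D u) v = 0"
    using vanish D_cocycle by blast
  ultimately show ?thesis
    using Q unfolding quadratic_form_on_def by blast
qed

lemma not_k_symplectic_if_cocycles_vanish_at:
  fixes K :: "'v::euclidean_space set"
  assumes "u \<in> K" and "u \<noteq> 0"
    and vanish: "\<forall>\<theta>. skew_cocycle_on K br \<theta> \<longrightarrow> (\<forall>v\<in>K. \<theta> u v = 0)"
  shows "\<not> k_symplectic_on K br k h \<theta>"
proof
  assume ks: "k_symplectic_on K br k h \<theta>"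
  then have "skew_cocycle_on K br (\<theta> i)" if "i \<in> {1..k}" for i
    using that unfolding k_symplectic_on_def skew_cocycle_on_def by blast
  then have u_in_kernel: "\<forall>i\<in>{1..k}. \<forall>v\<in>K. \<theta> i u v = 0"
    using vanish by blast
  have "\<forall>x\<in>K. (\<forall>i\<in>{1..k}. \<forall>v\<in>K. \<theta> i x v = 0) \<longrightarrow> x = 0"
    using ks unfolding k_symplectic_on_def by blast
  with \<open>u \<in> K\<close> u_in_kernel have "u = 0"
    by blast
  with \<open>u \<noteq> 0\<close> show False
    by contradiction
qed

abbreviation dext_product_bracket ::
    "('g::real_vector \<Rightarrow> 'g \<Rightarrow> real) \<Rightarrow> ('g \<Rightarrow> 'g) \<Rightarrow>
      (real \<times> 'g \<times> real) \<times> 'a \<Rightarrow> (real \<times> 'g \<times> real) \<times> 'a \<Rightarrow> (real \<times> 'g \<times> real) \<times> ('a::zero)" where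
  "dext_product_bracket Bg A \<equiv> prod_bracket (dext_bracket (\<lambda>_ _. 0) Bg A) (\<lambda>_ _. 0)"

abbreviation dext_product_form ::
    "('g::real_vector \<Rightarrow> 'g \<Rightarrow> real) \<Rightarrow> ('a \<Rightarrow> 'a \<Rightarrow> real) \<Rightarrow>
      (real \<times> 'g \<times> real) \<times> 'a \<Rightarrow> (real \<times> 'g \<times> real) \<times> 'a \<Rightarrow> real" where
  "dext_product_form Bg Ba \<equiv> prod_form (dext_form Bg) Ba"

lemma dext_product_form_quadratic:
  fixes Bg :: "'g::real_vector \<Rightarrow> 'g \<Rightarrow> real" and Ba :: "'a::real_vector \<Rightarrow> 'a \<Rightarrow> real"
  assumes Bg: "quadratic_form_on UNIV Bg" and "subspace Sa" and Ba: "quadratic_form_on Sa Ba"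
  shows "quadratic_form_on (UNIV \<times> Sa) (dext_product_form Bg Ba)"
proof -
  have Bg_bil: "bilinear_on UNIV Bg" and Bg_sym: "Bg u v = Bg v u" for u v
    using Bg unfolding quadratic_form_on_def by auto
  have Ba_bil: "bilinear_on Sa Ba" and Ba_sym: "\<forall>w\<in>Sa. \<forall>w'\<in>Sa. Ba w w' = Ba w' w"
    using Ba unfolding quadratic_form_on_def by auto
  have "0 \<in> Sa"
    using \<open>subspace Sa\<close> by (rule subspace_0)
  have Ba_0: "Ba w 0 = 0" if "w \<in> Sa" for w
    using Ba_bil \<open>0 \<in> Sa\<close> that unfolding bilinear_on_def by (metis mult_zero_left scale_zero_left)
  have "bilinear_on (UNIV \<times> Sa) (dext_product_form Bg Ba)"
    using Ba_bil unfolding bilinear_on_def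
    by (auto simp: split_paired_all bilinear_on_UNIV_simps[OF Bg_bil] algebra_simps)
  moreover have "\<forall>x\<in>UNIV \<times> Sa. \<forall>y\<in>UNIV \<times> Sa. dext_product_form Bg Ba x y = dext_product_form Bg Ba y x"
    using Ba_sym by (auto simp: Bg_sym)
  moreover have "x = 0"
    if "x \<in> UNIV \<times> Sa" and "\<forall>y\<in>UNIV \<times> Sa. dext_product_form Bg Ba x y = 0" for x
  proof -
    obtain r u rb w where x: "x = ((r, u, rb), w)"
      by (metis prod.exhaust)
    with \<open>x \<in> UNIV \<times> Sa\<close> have "w \<in> Sa"
      by simp
    have pairing: "r * sb + rb * s + Bg u v + Ba w y = 0" if "y \<in> Sa" for s v sb y
      using \<open>\<forall>y\<in>UNIV \<times> Sa. _ = 0\<close> that by (auto simp: x)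
    have "r = 0" and "rb = 0"
      using pairing[where s=0 and v=0 and sb=1, OF \<open>0 \<in> Sa\<close>] pairing[where s=1 and v=0 and sb=0, OF \<open>0 \<in> Sa\<close>]
      by (simp_all add: Ba_0 \<open>w \<in> Sa\<close> bilinear_on_UNIV_simps[OF Bg_bil])
    moreover have "u = 0"
      using pairing[where s=0 and sb=0, OF \<open>0 \<in> Sa\<close>] Bg unfolding quadratic_form_on_def
      by (simp add: Ba_0 \<open>w \<in> Sa\<close>)
    moreover have "w = 0"
      using pairing[where s=0 and v=0 and sb=0] Ba \<open>w \<in> Sa\<close> unfolding quadratic_form_on_def
      by (simp add: bilinear_on_UNIV_simps[OF Bg_bil])
    ultimately show ?thesis
      by (simp add: x zero_prod_def)
  qed
  ultimately show ?thesis
    unfolding quadratic_form_on_def by blast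
qed

lemma dext_product_form_invariant:
  fixes Bg :: "'g::real_vector \<Rightarrow> 'g \<Rightarrow> real" and Ba :: "'a::real_vector \<Rightarrow> 'a \<Rightarrow> real"
  assumes Bg: "quadratic_form_on UNIV Bg" and A_skew: "\<And>u v. Bg (A u) v = - Bg u (A v)"
    and Ba: "bilinear_on Sa Ba"
  shows "\<forall>x\<in>UNIV \<times> Sa. \<forall>y\<in>UNIV \<times> Sa. \<forall>z\<in>UNIV \<times> Sa.
    dext_product_form Bg Ba (dext_product_bracket Bg A x y) z =
    - dext_product_form Bg Ba y (dext_product_bracket Bg A x z)"
proof -
  have Bg_bil: "bilinear_on UNIV Bg" and Bg_sym: "Bg u v = Bg v u" for u v
    using Bg unfolding quadratic_form_on_def by auto
  have Ba_0: "Ba 0 w = 0" "Ba w 0 = 0" if "w \<in> Sa" for w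
    using Ba that unfolding bilinear_on_def by (metis mult_zero_left scale_zero_left)+
  show ?thesis
  proof (intro ballI)
    fix x y z :: "(real \<times> 'g \<times> real) \<times> 'a"
    assume "x \<in> UNIV \<times> Sa" "y \<in> UNIV \<times> Sa" "z \<in> UNIV \<times> Sa"
    moreover obtain r u rb w s v sb w' t q tb w'' where
      "x = ((r, u, rb), w)" "y = ((s, v, sb), w')" "z = ((t, q, tb), w'')"
      by (metis prod.exhaust)
    moreover have "Bg v (A u) = Bg (A u) v" and "Bg (A v) q = - Bg v (A q)"
      by (rule Bg_sym) (rule A_skew)
    ultimately show "dext_product_form Bg Ba (dext_product_bracket Bg A x y) z =
        - dext_product_form Bg Ba y (dext_product_bracket Bg A x z)"
      by (simp add: Ba_0 bilinear_on_UNIV_simps[OF Bg_bil] algebra_simps)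
  qed
qed

lemma dext_product_bracket_antisym:
  fixes x y :: "(real \<times> 'g::real_vector \<times> real) \<times> 'a::real_vector"
  assumes "quadratic_form_on UNIV Bg" and "\<And>u v. Bg (A u) v = - Bg u (A v)"
  shows "dext_product_bracket Bg A x y = - dext_product_bracket Bg A y x"
proof -
  obtain r u rb w s v sb w' where "x = ((r, u, rb), w)" and "y = ((s, v, sb), w')"
    by (metis prod.exhaust)
  moreover have "Bg (A u) v = - Bg (A v) u"
  proof -
    have "Bg u (A v) = Bg (A v) u"
      using assms(1) unfolding quadratic_form_on_def by blast
    with assms(2)[of u v] show ?thesis
      by simp
  qed
  ultimately show ?thesis
    by simp
qed

lemma dext_product_skew_derivation_cocycle:
  fixes Bg :: "'g::real_vector \<Rightarrow> 'g \<Rightarrow> real" and Ba :: "'a::real_vector \<Rightarrow> 'a \<Rightarrow> real"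
  assumes Bg: "quadratic_form_on UNIV Bg" and A_skew: "\<And>u v. Bg (A u) v = - Bg u (A v)"
    and Sa: "subspace Sa" and Ba: "quadratic_form_on Sa Ba"
    and D: "lie_derivation_on (UNIV \<times> Sa) (dext_product_bracket Bg A) D"
      "skew_on (UNIV \<times> Sa) (dext_product_form Bg Ba) D"
  shows "skew_cocycle_on (UNIV \<times> Sa) (dext_product_bracket Bg A)
    (\<lambda>x y. dext_product_form Bg Ba (D x) y)"
proof (rule skew_derivation_skew_cocycle[OF _ _ _ _ _ D])
  have Ba_bil: "bilinear_on Sa Ba"
    using Ba unfolding quadratic_form_on_def by blast
  have "quadratic_form_on (UNIV \<times> Sa) (dext_product_form Bg Ba)"
    using Bg Sa Ba by (rule dext_product_form_quadratic)
  then show "bilinear_on (UNIV \<times> Sa) (dext_product_form Bg Ba)"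
    and "\<And>x y. x \<in> UNIV \<times> Sa \<Longrightarrow> y \<in> UNIV \<times> Sa \<Longrightarrow>
      dext_product_form Bg Ba x y = dext_product_form Bg Ba y x"
    unfolding quadratic_form_on_def by blast+
  show "\<forall>x\<in>UNIV \<times> Sa. \<forall>y\<in>UNIV \<times> Sa. \<forall>z\<in>UNIV \<times> Sa.
      dext_product_form Bg Ba (dext_product_bracket Bg A x y) z =
      - dext_product_form Bg Ba y (dext_product_bracket Bg A x z)"
    using Bg A_skew Ba_bil by (rule dext_product_form_invariant)
  show "\<And>x y. x \<in> UNIV \<times> Sa \<Longrightarrow> y \<in> UNIV \<times> Sa \<Longrightarrow>
      dext_product_bracket Bg A x y = - dext_product_bracket Bg A y x"
    by (rule dext_product_bracket_antisym[OF Bg A_skew])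
  show "\<And>x y. dext_product_bracket Bg A x y \<in> UNIV \<times> Sa"
    using Sa by (auto simp: subspace_0 split_paired_all)
qed

locale dext_product_cocycle =
  fixes Bg :: "'g::euclidean_space \<Rightarrow> 'g \<Rightarrow> real" and A :: "'g \<Rightarrow> 'g"
    and Sa :: "'a::real_vector set"
    and \<theta> :: "(real \<times> 'g \<times> real) \<times> 'a \<Rightarrow> (real \<times> 'g \<times> real) \<times> 'a \<Rightarrow> real"
  assumes Bg_quadratic: "quadratic_form_on UNIV Bg"
    and A_linear: "linear A" and A_skew: "\<And>u v. Bg (A u) v = - Bg u (A v)"
    and Sa_subspace: "subspace Sa"
    and \<theta>_cocycle: "skew_cocycle_on (UNIV \<times> Sa) (dext_product_bracket Bg A) \<theta>"
begin

lemma Bg_bilinear: "bilinear_on UNIV Bg"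
  and Bg_sym: "Bg u v = Bg v u"
  and Bg_nondegenerate: "(\<forall>v. Bg u v = 0) \<Longrightarrow> u = 0"
  using Bg_quadratic unfolding quadratic_form_on_def by auto

lemmas Bg_simps [simp] = bilinear_on_UNIV_simps[OF Bg_bilinear]

lemmas A_simps [simp] = linear_add[OF A_linear] linear_diff[OF A_linear] linear_neg[OF A_linear]
  linear_scale[OF A_linear] linear_0[OF A_linear]

lemma Sa_0 [simp]: "0 \<in> Sa"
  using Sa_subspace by (rule subspace_0)

lemma carrier_add: "x \<in> UNIV \<times> Sa \<Longrightarrow> y \<in> UNIV \<times> Sa \<Longrightarrow> x + y \<in> UNIV \<times> Sa"
  and carrier_scale: "x \<in> UNIV \<times> Sa \<Longrightarrow> c *\<^sub>R x \<in> UNIV \<times> Sa"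
  using subspace_add[OF Sa_subspace] subspace_scale[OF Sa_subspace] by (auto simp: mem_Times_iff)

lemma theta_add_left: "\<theta> (x + y) z = \<theta> x z + \<theta> y z"
  and theta_add_right: "\<theta> z (x + y) = \<theta> z x + \<theta> z y"
  if "x \<in> UNIV \<times> Sa" "y \<in> UNIV \<times> Sa" "z \<in> UNIV \<times> Sa"
  using \<theta>_cocycle that unfolding skew_cocycle_on_def bilinear_on_def by blast+

lemma theta_scale_left: "\<theta> (c *\<^sub>R x) z = c * \<theta> x z"
  and theta_scale_right: "\<theta> z (c *\<^sub>R x) = c * \<theta> z x"
  if "x \<in> UNIV \<times> Sa" "z \<in> UNIV \<times> Sa"
  using \<theta>_cocycle that unfolding skew_cocycle_on_def bilinear_on_def by blast+

lemma theta_antisym: "x \<in> UNIV \<times> Sa \<Longrightarrow> y \<in> UNIV \<times> Sa \<Longrightarrow> \<theta> x y = - \<theta> y x"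
  using \<theta>_cocycle unfolding skew_cocycle_on_def by blast

lemma theta_cocycle_identity:
  assumes "x \<in> UNIV \<times> Sa" "y \<in> UNIV \<times> Sa" "z \<in> UNIV \<times> Sa"
  shows "\<theta> (dext_product_bracket Bg A x y) z
    + \<theta> (dext_product_bracket Bg A y z) x
    + \<theta> (dext_product_bracket Bg A z x) y = 0"
  using \<theta>_cocycle assms unfolding skew_cocycle_on_def by blast

lemma e_mem_carrier [simp]: "(dext_e, 0) \<in> UNIV \<times> Sa"
  by simp

lemma theta_central_left [simp]:
  "y \<in> UNIV \<times> Sa \<Longrightarrow> \<theta> ((c, 0, 0), 0) y = c * \<theta> (dext_e, 0) y"
  using theta_scale_left[of "(dext_e, 0)" y c] by (simp add: dext_e_def)

lemma theta_e_Sa_eq_0: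
  assumes "A \<noteq> (\<lambda>_. 0)" and "w \<in> Sa"
  shows "\<theta> (dext_e, 0) ((0, 0, 0), w) = 0"
proof -
  obtain u where "A u \<noteq> 0"
    using assms(1) by auto
  then obtain v where v: "Bg (A u) v \<noteq> 0"
    using Bg_nondegenerate by blast
  have "Bg (A u) v * \<theta> (dext_e, 0) ((0, 0, 0), w) = 0"
    using theta_cocycle_identity[of "((0, u, 0), 0)" "((0, v, 0), 0)" "((0, 0, 0), w)"] \<open>w \<in> Sa\<close>
    by simp
  with v show ?thesis
    by simp
qed

lemma theta_e_image_A_eq_0: "\<theta> (dext_e, 0) ((0, A s, 0), 0) = 0"
proof -
  have "\<theta> ((0, A s, 0), 0) ((1, 0, 0), 0) = 0"
    using theta_cocycle_identity[of "((0, 0, 1), 0)" "((0, s, 0), 0)" "((1, 0, 0), 0)"] by simp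
  then show ?thesis
    using theta_antisym[of "((1, 0, 0), 0)" "((0, A s, 0), 0)"] by simp
qed

lemma theta_e_g_relation:
  "\<theta> (dext_e, 0) ((0, v, 0), 0) *\<^sub>R A (A u) = \<theta> (dext_e, 0) ((0, u, 0), 0) *\<^sub>R A (A v)"
proof (rule nondegenerate_form_eqI[OF Bg_bilinear Bg_nondegenerate])
  fix s
  have "Bg (A u) v * \<theta> (dext_e, 0) ((0, A s, 0), 0) + Bg (A v) (A s) * \<theta> (dext_e, 0) ((0, u, 0), 0)
      + Bg (A (A s)) u * \<theta> (dext_e, 0) ((0, v, 0), 0) = 0"
    using theta_cocycle_identity[of "((0, u, 0), 0)" "((0, v, 0), 0)" "((0, A s, 0), 0)"] by simp
  moreover have "Bg (A v) (A s) = - Bg (A (A v)) s" and "Bg (A (A s)) u = Bg (A (A u)) s"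
    using A_skew Bg_sym by (metis, metis minus_minus)
  ultimately show "Bg (\<theta> (dext_e, 0) ((0, v, 0), 0) *\<^sub>R A (A u)) s
      = Bg (\<theta> (dext_e, 0) ((0, u, 0), 0) *\<^sub>R A (A v)) s"
    by (simp add: theta_e_image_A_eq_0 algebra_simps)
qed

text \<open>If \<theta>(e, t) \<noteq> 0, the relation with u = A t gives A^3 t = 0 (as \<theta>(e, A t) = 0), and then
  for arbitrary u it puts A^3 u on the line through A^3 t; so A^3 = 0.\<close>
lemma theta_e_g_eq_0:
  assumes "A ^^ 3 \<noteq> (\<lambda>_. 0)"
  shows "\<theta> (dext_e, 0) ((0, t, 0), 0) = 0"
proof (rule ccontr)
  let ?\<phi> = "\<lambda>t. \<theta> (dext_e, 0) ((0, t, 0), 0)"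
  assume "?\<phi> t \<noteq> 0"
  have "?\<phi> t *\<^sub>R A (A (A t)) = 0"
    using theta_e_g_relation[where v = t and u = "A t"] theta_e_image_A_eq_0 by simp
  with \<open>?\<phi> t \<noteq> 0\<close> have "A (A (A t)) = 0"
    by simp
  have "?\<phi> t *\<^sub>R A (A (A v)) = 0" for v
    using arg_cong[OF theta_e_g_relation[where v = t and u = v], of A] \<open>A (A (A t)) = 0\<close> by simp
  with \<open>?\<phi> t \<noteq> 0\<close> have "(A ^^ 3) v = 0" for v
    by (simp add: numeral_3_eq_3)
  with assms show False
    by (auto simp: fun_eq_iff)
qed

lemma theta_g_g_bilinear: "bilinear_on UNIV (\<lambda>u v. \<theta> ((0, u, 0), 0) ((0, v, 0), 0))"
proof -
  have "(((0, x + y, 0), 0) :: (real \<times> 'g \<times> real) \<times> 'a) = ((0, x, 0), 0) + ((0, y, 0), 0)"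
    and "(((0, c *\<^sub>R x, 0), 0) :: (real \<times> 'g \<times> real) \<times> 'a) = c *\<^sub>R ((0, x, 0), 0)" for x y :: 'g and c
    by simp_all
  then show ?thesis
    unfolding bilinear_on_def
    by (simp only: theta_add_left theta_add_right theta_scale_left theta_scale_right
        mem_Sigma_iff UNIV_I Sa_0 simp_thms ball_UNIV)
qed

lemma theta_g_g_commutator:
  assumes P: "\<And>u v. \<theta> ((0, u, 0), 0) ((0, v, 0), 0) = Bg (P u) v"
  shows "P (A u) - A (P u) = (- \<theta> (dext_e, 0) ((0, 0, 1), 0)) *\<^sub>R A u"
proof (rule nondegenerate_form_eqI[OF Bg_bilinear Bg_nondegenerate])
  fix v
  have "\<theta> ((0, A u, 0), 0) ((0, v, 0), 0) + Bg (A u) v * \<theta> (dext_e, 0) ((0, 0, 1), 0)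
      + \<theta> ((0, - A v, 0), 0) ((0, u, 0), 0) = 0"
    using theta_cocycle_identity[of "((0, 0, 1), 0)" "((0, u, 0), 0)" "((0, v, 0), 0)"] by simp
  moreover have "\<theta> ((0, - A v, 0), 0) ((0, u, 0), 0) = Bg (P u) (A v)"
    using theta_antisym[of "((0, - A v, 0), 0)" "((0, u, 0), 0)"] P[of u "- A v"] by simp
  ultimately show "Bg (P (A u) - A (P u)) v = Bg ((- \<theta> (dext_e, 0) ((0, 0, 1), 0)) *\<^sub>R A u) v"
    by (simp add: P A_skew algebra_simps)
qed

lemma theta_e_ebar_eq_0:
  assumes "\<forall>m. A ^^ m \<noteq> (\<lambda>_. 0)"
  shows "\<theta> (dext_e, 0) ((0, 0, 1), 0) = 0"
proof -
  obtain P where "linear P" and P: "\<And>u v. \<theta> ((0, u, 0), 0) ((0, v, 0), 0) = Bg (P u) v"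
    using nondegenerate_form_represents_bilinear_form[OF Bg_bilinear Bg_nondegenerate theta_g_g_bilinear]
    by blast
  show ?thesis
  proof (rule ccontr)
    assume "\<theta> (dext_e, 0) ((0, 0, 1), 0) \<noteq> 0"
    then have "\<exists>m. A ^^ m = (\<lambda>_. 0)"
      using \<open>linear P\<close> A_linear theta_g_g_commutator[OF P]
      by (intro commutator_eq_scaleR_imp_nilpotent[where P = P and c = "- \<theta> (dext_e, 0) ((0, 0, 1), 0)"]) (simp_all add: linear_conv_bounded_linear)
    with assms show False
      by blast
  qed
qed

lemma theta_e_vanishes:
  assumes "\<forall>m. A ^^ m \<noteq> (\<lambda>_. 0)" and "y \<in> UNIV \<times> Sa"
  shows "\<theta> (dext_e, 0) y = 0"
proof -
  obtain r u rb w where y: "y = ((r, u, rb), w)"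
    by (metis prod.exhaust)
  with \<open>y \<in> UNIV \<times> Sa\<close> have "w \<in> Sa"
    by simp
  have y_decomp: "y = r *\<^sub>R (dext_e, 0) + (((0, u, 0), 0) + (rb *\<^sub>R ((0, 0, 1), 0) + ((0, 0, 0), w)))"
    by (simp add: y dext_e_def)
  have "\<theta> (dext_e, 0) y = r * \<theta> (dext_e, 0) (dext_e, 0) + (\<theta> (dext_e, 0) ((0, u, 0), 0)
      + (rb * \<theta> (dext_e, 0) ((0, 0, 1), 0) + \<theta> (dext_e, 0) ((0, 0, 0), w)))"
    unfolding y_decomp using \<open>w \<in> Sa\<close>
    by (simp only: theta_add_right theta_scale_right carrier_add carrier_scale e_mem_carrier
        mem_Sigma_iff UNIV_I Sa_0 simp_thms)
  also have "\<dots> = 0"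
  proof -
    have "A \<noteq> (\<lambda>_. 0)" and "A ^^ 3 \<noteq> (\<lambda>_. 0)"
      using assms(1)[rule_format, of 1] assms(1) by simp_all
    then show ?thesis
      using theta_antisym[of "(dext_e, 0)" "(dext_e, 0)"] theta_e_Sa_eq_0[OF _ \<open>w \<in> Sa\<close>] theta_e_g_eq_0[of u]
        theta_e_ebar_eq_0[OF assms(1)]
      by simp
  qed
  finally show ?thesis .
qed

end

theorem mainTheorem8:
  fixes Bg :: "'g::euclidean_space \<Rightarrow> 'g \<Rightarrow> real"
    and A :: "'g \<Rightarrow> 'g"
    and Sa :: "'a::euclidean_space set"
    and Ba :: "'a \<Rightarrow> 'a \<Rightarrow> real"
  assumes g_quad: "quadratic_form_on UNIV Bg"
    and A_lin: "linear A"
    and A_skew: "\<forall>u v. Bg (A u) v = - Bg u (A v)"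
    and A_not_nilpotent: "\<forall>m. A ^^ m \<noteq> (\<lambda>_. 0)"
    and Sa_sub: "subspace Sa"
    and a_quad: "quadratic_form_on Sa Ba"
  defines "V \<equiv> (UNIV :: (real \<times> 'g \<times> real) set) \<times> Sa"
    and "br \<equiv> prod_bracket (dext_bracket (\<lambda>_ _. 0) Bg A) (\<lambda>_ _. 0)"
    and "Q \<equiv> prod_form (dext_form Bg) Ba"
  shows "(\<forall>D. lie_derivation_on V br D \<and> skew_on V Q D \<longrightarrow> D (dext_e, 0) = 0)
         \<and> (\<forall>k h \<theta>. \<not> k_symplectic_on V br k h \<theta>)"
proof -
  let ?e = "(dext_e, 0) :: (real \<times> 'g \<times> real) \<times> 'a"
  have e_in_V: "?e \<in> V"
    using Sa_sub by (simp add: V_def subspace_0)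
  have cocycle_e: "\<forall>\<theta>. skew_cocycle_on V br \<theta> \<longrightarrow> (\<forall>y\<in>V. \<theta> ?e y = 0)"
  proof (intro allI impI ballI)
    fix \<theta> y assume "skew_cocycle_on V br \<theta>" and "y \<in> V"
    then have "dext_product_cocycle Bg A Sa \<theta>"
      using g_quad A_lin A_skew Sa_sub unfolding dext_product_cocycle_def V_def br_def by blast
    then show "\<theta> ?e y = 0"
      using A_not_nilpotent \<open>y \<in> V\<close> unfolding V_def by (rule dext_product_cocycle.theta_e_vanishes)
  qed
  have "D (dext_e, 0) = 0" if "lie_derivation_on V br D" and "skew_on V Q D" for D
  proof (rule skew_derivation_eq_0_if_cocycles_vanish_at[OF _ e_in_V that(1) _ cocycle_e])
    show "quadratic_form_on V Q"
      unfolding V_def Q_def using g_quad Sa_sub a_quad by (rule dext_product_form_quadratic)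
    show "skew_cocycle_on V br (\<lambda>x y. Q (D x) y)"
      using dext_product_skew_derivation_cocycle[OF g_quad _ Sa_sub a_quad] A_skew that
      unfolding V_def br_def Q_def by blast
  qed
  moreover have "\<not> k_symplectic_on V br k h \<theta>" for k h \<theta>
    by (rule not_k_symplectic_if_cocycles_vanish_at[OF e_in_V _ cocycle_e])
      (simp add: dext_e_def zero_prod_def)
  ultimately show ?thesis
    by blast
qed

end
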